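(* Let $X$ and $Y$ be Hausdorff compact spaces and $\pi: X \to Y$ a fully closed continuous surjection. Let $y_1, \dots, y_n \in Y$ be distinct points and, for each $i = 1,\dots,n$, let $f_i$ be a real-valued continuous function on $\pi^{-1}(y_i)$. Then there exists $\tilde f \in C(X)$ such that $\tilde f|_{\pi^{-1}(y_i)} = f_i$ for $i=1,\dots,n$ and $\tilde f$ has oscillation $0$ (i.e. is constant) on $\pi^{-1}(y')$ for every $y' \in Y \setminus \{y_1,\dots,y_n\}$.
   Context: A continuous surjection $\pi: X \to Y$ between Hausdorff compacta is fully closed if for any two closed disjoint subsets $F_1, F_2 \subset X$ the set $\pi(F_1)\cap\pi(F_2)$ is finite. $C(X)$ denotes the real continuous functions on $X$. *)

theory Defs
  imports "HOL-Analysis.Analysis"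
begin

definition fully_closed :: "'a topology \<Rightarrow> 'b topology \<Rightarrow> ('a \<Rightarrow> 'b) \<Rightarrow> bool" where
  "fully_closed X Y \<pi> \<longleftrightarrow>
     (\<forall>F1 F2. closedin X F1 \<and> closedin X F2 \<and> F1 \<inter> F2 = {} \<longrightarrow>
        finite (\<pi> ` F1 \<inter> \<pi> ` F2))"

definition fibre :: "'a topology \<Rightarrow> ('a \<Rightarrow> 'b) \<Rightarrow> 'b \<Rightarrow> 'a set" where
  "fibre X \<pi> y = {x \<in> topspace X. \<pi> x = y}"

end

theory Submission
  imports Defs
begin

text \<open>Collapse to a point every fibre of \<pi> over a point outside A = {y_1, ..., y_n}, keeping the
fibres over A pointwise. Full closedness makes the saturation of a closed set F closed: near a
point of a fibre over A the saturation adds only the fibres over the finite set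
\<pi>(closure V) \<inter> \<pi>(F) for a small neighbourhood V, and these can be cut away. Hence the quotient
map is closed, the quotient is normal, and it contains the union of the fibres over A as a
closed copy. The f_i paste to a continuous function there; a Tietze extension to the quotient,
composed with the quotient map, is the required function.\<close>

definition quotient_topology :: "'a topology \<Rightarrow> ('a \<Rightarrow> 'b) \<Rightarrow> 'b topology" where
  "quotient_topology X q =
     topology (\<lambda>U. U \<subseteq> q ` topspace X \<and> openin X {x \<in> topspace X. q x \<in> U})"

lemma openin_quotient_topology:
  "openin (quotient_topology X q) U \<longleftrightarrow> U \<subseteq> q ` topspace X \<and> openin X {x \<in> topspace X. q x \<in> U}"
proof -
  have "{x \<in> topspace X. q x \<in> S \<inter> T} = {x \<in> topspace X. q x \<in> S} \<inter> {x \<in> topspace X. q x \<in> T}"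
    for S T by blast
  moreover have "{x \<in> topspace X. q x \<in> \<Union>\<U>} = (\<Union>U\<in>\<U>. {x \<in> topspace X. q x \<in> U})"
    for \<U> by blast
  ultimately have "istopology (\<lambda>U. U \<subseteq> q ` topspace X \<and> openin X {x \<in> topspace X. q x \<in> U})"
    unfolding istopology_def by (auto intro!: openin_Int openin_Union)
  then show ?thesis
    by (simp add: quotient_topology_def)
qed

lemma topspace_quotient_topology: "topspace (quotient_topology X q) = q ` topspace X"
proof -
  have "{x \<in> topspace X. q x \<in> q ` topspace X} = topspace X"
    by blast
  then have "openin (quotient_topology X q) (q ` topspace X)"
    by (simp add: openin_quotient_topology)
  then show ?thesis
    by (metis openin_quotient_topology openin_subset openin_topspace subset_antisym)
qed

lemma quotient_map_quotient_topology: "quotient_map X (quotient_topology X q) q"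
  by (auto simp: quotient_map_def openin_quotient_topology topspace_quotient_topology)

lemma closed_map_quotient_topology:
  "closed_map X (quotient_topology X q) q \<longleftrightarrow>
     (\<forall>F. closedin X F \<longrightarrow> closedin X {x \<in> topspace X. q x \<in> q ` F})"
proof -
  have "closedin (quotient_topology X q) (q ` F) \<longleftrightarrow> closedin X {x \<in> topspace X. q x \<in> q ` F}"
    if "closedin X F" for F
  proof -
    have "q ` F \<subseteq> topspace (quotient_topology X q)"
      using closedin_subset[OF that] by (auto simp: topspace_quotient_topology)
    then show ?thesis
      using quotient_map_quotient_topology[of X q] by (simp add: quotient_map_closedin)
  qed
  then show ?thesis
    by (auto simp: closed_map_def)
qed

lemma Tietze_extension_through_closed_map:
  assumes "normal_space X" and q: "continuous_map X Z q" "closed_map X Z q" "q ` topspace X = topspace Z"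
    and K: "closedin X K" "inj_on q K"
    and h: "continuous_map (subtopology X K) euclideanreal h"
  obtains g where "continuous_map Z euclideanreal g" "\<And>x. x \<in> K \<Longrightarrow> g (q x) = h x"
proof -
  have topK: "topspace (subtopology X K) = K"
    using K(1) closedin_subset by auto
  have "embedding_map (subtopology X K) Z q"
    using K q by (intro injective_closed_imp_embedding_map)
      (auto simp: topK Int_absorb1 closedin_subset continuous_map_from_subtopology closed_map_from_subtopology)
  then obtain r where r: "homeomorphic_maps (subtopology X K) (subtopology Z (q ` K)) q r"
    unfolding embedding_map_def homeomorphic_map_maps topK by blast
  then have "continuous_map (subtopology Z (q ` K)) euclideanreal (h \<circ> r)"
    using h continuous_map_compose unfolding homeomorphic_maps_def by blast
  moreover have "normal_space Z"
    using normal_space_continuous_closed_map_image assms by blast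
  moreover have "closedin Z (q ` K)"
    using q(2) K(1) by (simp add: closed_map_def)
  ultimately obtain g where g: "continuous_map Z euclideanreal g" "\<And>z. z \<in> q ` K \<Longrightarrow> g z = h (r z)"
    by (metis Tietze_extension_realinterval comp_apply is_interval_univ subset_UNIV UNIV_not_empty)
  have "r (q x) = x" if "x \<in> K" for x
    using r that unfolding homeomorphic_maps_def topK by blast
  with g show ?thesis
    using that by simp
qed

lemma closedin_preimage_finite:
  assumes "t1_space Y" "continuous_map X Y \<pi>" "finite B"
  shows "closedin X {x \<in> topspace X. \<pi> x \<in> B}"
proof -
  have "closedin Y (B \<inter> topspace Y)"
    using assms by (simp add: t1_space_closedin_finite)
  then have "closedin X {x \<in> topspace X. \<pi> x \<in> B \<inter> topspace Y}"
    using assms(2) closedin_continuous_map_preimage by blast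
  moreover have "{x \<in> topspace X. \<pi> x \<in> B \<inter> topspace Y} = {x \<in> topspace X. \<pi> x \<in> B}"
    using assms(2) by (auto simp: continuous_map_def)
  ultimately show ?thesis by simp
qed

lemma fully_closed_saturation_nhood:
  assumes fc: "fully_closed X Y \<pi>" and "regular_space X" "t1_space Y" "continuous_map X Y \<pi>"
    and F: "closedin X F" and x: "x \<in> topspace X" "x \<notin> F" "\<pi> x \<in> A"
  obtains W where "openin X W" "x \<in> W" "W \<subseteq> topspace X - (F \<union> {z \<in> topspace X. \<pi> z \<in> \<pi> ` F - A})"
proof -
  obtain V where V: "openin X V" "x \<in> V" "disjnt F (X closure_of V)"
    using \<open>regular_space X\<close> F x unfolding regular_space by blast
  define B where "B = \<pi> ` (X closure_of V) \<inter> \<pi> ` F"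
  \<comment> \<open>Full closedness makes B finite, so W below differs from V by finitely many closed fibres.\<close>
  have "finite B"
    using fc F V(3) unfolding B_def fully_closed_def by (simp add: disjnt_def inf_commute)
  define W where "W = V - {z \<in> topspace X. \<pi> z \<in> B - A}"
  have "closedin X {z \<in> topspace X. \<pi> z \<in> B - A}"
    using closedin_preimage_finite[OF \<open>t1_space Y\<close> \<open>continuous_map X Y \<pi>\<close>] \<open>finite B\<close> by blast
  then have "openin X W"
    unfolding W_def using V(1) by (rule openin_diff[rotated])
  moreover have "x \<in> W"
    using x(3) V(2) by (simp add: W_def)
  moreover have "W \<subseteq> topspace X - (F \<union> {z \<in> topspace X. \<pi> z \<in> \<pi> ` F - A})"
  proof
    fix z assume "z \<in> W"
    then have zV: "z \<in> V" and zB: "\<not> (z \<in> topspace X \<and> \<pi> z \<in> B - A)"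
      by (auto simp: W_def)
    have "z \<in> topspace X"
      using openin_subset[OF V(1)] zV by blast
    have "z \<in> X closure_of V"
      using closure_of_subset[OF openin_subset[OF V(1)]] zV by blast
    then have "z \<notin> F"
      using V(3) by (meson disjnt_iff)
    moreover have "\<pi> z \<notin> \<pi> ` F - A"
      using zB \<open>z \<in> topspace X\<close> \<open>z \<in> X closure_of V\<close> by (auto simp: B_def)
    ultimately show "z \<in> topspace X - (F \<union> {z \<in> topspace X. \<pi> z \<in> \<pi> ` F - A})"
      using \<open>z \<in> topspace X\<close> by blast
  qed
  ultimately show ?thesis
    by (rule that)
qed

lemma fully_closed_saturation_closedin:
  assumes fc: "fully_closed X Y \<pi>" and "regular_space X" "t1_space Y"
    and \<pi>: "continuous_map X Y \<pi>" "closed_map X Y \<pi>" and F: "closedin X F"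
  shows "closedin X (F \<union> {x \<in> topspace X. \<pi> x \<in> \<pi> ` F - A})"
proof -
  let ?P = "{x \<in> topspace X. \<pi> x \<in> \<pi> ` F}" and ?S = "F \<union> {x \<in> topspace X. \<pi> x \<in> \<pi> ` F - A}"
  have "closedin X ?P"
    using \<pi> F by (simp add: closed_map_def closedin_continuous_map_preimage)
  have "?S \<subseteq> ?P"
    using closedin_subset[OF F] by auto
  have "\<exists>W. openin X W \<and> x \<in> W \<and> W \<subseteq> topspace X - ?S" if x: "x \<in> topspace X - ?S" for x
  proof (cases "x \<in> ?P")
    case False
    then show ?thesis
      using \<open>closedin X ?P\<close> \<open>?S \<subseteq> ?P\<close> x by (intro exI[of _ "topspace X - ?P"]) auto
  next
    case True
    with x have "x \<in> topspace X" "x \<notin> F" "\<pi> x \<in> A"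
      by auto
    then obtain W where "openin X W" "x \<in> W" "W \<subseteq> topspace X - ?S"
      by (rule fully_closed_saturation_nhood[OF fc \<open>regular_space X\<close> \<open>t1_space Y\<close> \<pi>(1) F])
    then show ?thesis
      by blast
  qed
  then have "openin X (topspace X - ?S)"
    by (subst openin_subopen) blast
  moreover have "?S \<subseteq> topspace X"
    using closedin_subset[OF F] by blast
  ultimately show ?thesis
    by (simp add: closedin_def)
qed

definition collapse_fibres :: "'a topology \<Rightarrow> ('a \<Rightarrow> 'b) \<Rightarrow> 'b set \<Rightarrow> 'a \<Rightarrow> 'a set" where
  "collapse_fibres X \<pi> A x = (if \<pi> x \<in> A then {x} else fibre X \<pi> (\<pi> x))"

lemma collapse_fibres_eq_iff:
  assumes "x \<in> topspace X" "x' \<in> topspace X"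
  shows "collapse_fibres X \<pi> A x = collapse_fibres X \<pi> A x' \<longleftrightarrow>
           x = x' \<or> (\<pi> x = \<pi> x' \<and> \<pi> x \<notin> A)"
proof
  assume eq: "collapse_fibres X \<pi> A x = collapse_fibres X \<pi> A x'"
  have "x \<in> collapse_fibres X \<pi> A x"
    using assms(1) by (simp add: collapse_fibres_def fibre_def)
  then have "\<pi> x = \<pi> x'"
    unfolding eq by (auto simp: collapse_fibres_def fibre_def split: if_splits)
  with eq show "x = x' \<or> (\<pi> x = \<pi> x' \<and> \<pi> x \<notin> A)"
    by (auto simp: collapse_fibres_def)
qed (auto simp: collapse_fibres_def)

lemma collapse_fibres_saturation:
  assumes "F \<subseteq> topspace X"
  shows "{x \<in> topspace X. collapse_fibres X \<pi> A x \<in> collapse_fibres X \<pi> A ` F} =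
           F \<union> {x \<in> topspace X. \<pi> x \<in> \<pi> ` F - A}"
  using assms by (auto simp: image_iff collapse_fibres_eq_iff subset_iff)

lemma closed_map_collapse_fibres:
  assumes "fully_closed X Y \<pi>" "compact_space X" "Hausdorff_space X" "Hausdorff_space Y"
    and "continuous_map X Y \<pi>"
  shows "closed_map X (quotient_topology X (collapse_fibres X \<pi> A)) (collapse_fibres X \<pi> A)"
proof -
  have "regular_space X" "t1_space Y" "closed_map X Y \<pi>"
    using assms by (simp_all add: compact_Hausdorff_imp_regular_space Hausdorff_imp_t1_space
        continuous_imp_closed_map_gen Hausdorff_imp_kc_space)
  then show ?thesis
    unfolding closed_map_quotient_topology
    using fully_closed_saturation_closedin[OF assms(1) _ _ assms(5)]
    by (simp add: collapse_fibres_saturation closedin_subset)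
qed

lemma continuous_map_paste_fibres:
  assumes "t1_space Y" "continuous_map X Y \<pi>" "finite I" "inj_on y I"
    and f: "\<And>i. i \<in> I \<Longrightarrow> continuous_map (subtopology X (fibre X \<pi> (y i))) Z (f i)"
  shows "continuous_map (subtopology X {x \<in> topspace X. \<pi> x \<in> y ` I}) Z
           (\<lambda>x. f (inv_into I y (\<pi> x)) x)"
proof -
  let ?K = "{x \<in> topspace X. \<pi> x \<in> y ` I}"
  have fibK: "fibre X \<pi> (y i) \<subseteq> ?K" if "i \<in> I" for i
    using that by (auto simp: fibre_def)
  have cover: "topspace (subtopology X ?K) \<subseteq> (\<Union>i\<in>I. fibre X \<pi> (y i))"
    by (auto simp: fibre_def)
  have closed: "closedin (subtopology X ?K) (fibre X \<pi> (y i))" if "i \<in> I" for i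
  proof -
    have "closedin X (fibre X \<pi> (y i))"
      using closedin_preimage_finite[OF assms(1,2), of "{y i}"] by (simp add: fibre_def)
    then show ?thesis
      using fibK that by (simp add: closedin_subset_topspace)
  qed
  have cont: "continuous_map (subtopology (subtopology X ?K) (fibre X \<pi> (y i))) Z (f i)"
    if "i \<in> I" for i
    using fibK that f by (simp add: subtopology_subtopology Int_absorb1)
  have agree: "f i x = f j x"
    if "i \<in> I" "j \<in> I" "x \<in> topspace (subtopology X ?K) \<inter> fibre X \<pi> (y i) \<inter> fibre X \<pi> (y j)"
    for i j x
    using that assms(4) by (auto simp: fibre_def inj_on_def)
  obtain g where g: "continuous_map (subtopology X ?K) Z g"
    "\<And>x i. \<lbrakk>i \<in> I; x \<in> topspace (subtopology X ?K) \<inter> fibre X \<pi> (y i)\<rbrakk> \<Longrightarrow> g x = f i x"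
    using pasting_lemma_exists_closed[OF assms(3) cover closed cont agree] by blast
  have eq: "g x = f (inv_into I y (\<pi> x)) x" if x: "x \<in> topspace (subtopology X ?K)" for x
  proof -
    obtain i where i: "i \<in> I" "\<pi> x = y i"
      using x by auto
    have "x \<in> topspace (subtopology X ?K) \<inter> fibre X \<pi> (y i)"
      using x i(2) by (simp add: fibre_def)
    then have "g x = f i x"
      using g(2) i(1) by blast
    moreover have "inv_into I y (\<pi> x) = i"
      unfolding i(2) using assms(4) i(1) by (rule inv_into_f_f)
    ultimately show ?thesis
      by (simp only:)
  qed
  show ?thesis
    by (rule continuous_map_eq[OF g(1) eq])
qed

theorem corollary4p4:
  fixes X :: "'a topology" and Y :: "'b topology" and \<pi> :: "'a \<Rightarrow> 'b"
    and n :: nat and y :: "nat \<Rightarrow> 'b" and f :: "nat \<Rightarrow> 'a \<Rightarrow> real"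
  assumes "Hausdorff_space X" and "compact_space X"
    and "Hausdorff_space Y" and "compact_space Y"
    and "continuous_map X Y \<pi>" and "\<pi> ` topspace X = topspace Y"
    and "fully_closed X Y \<pi>"
    and "inj_on y {..<n}" and "y ` {..<n} \<subseteq> topspace Y"
    and "\<And>i. i < n \<Longrightarrow> continuous_map (subtopology X (fibre X \<pi> (y i))) euclideanreal (f i)"
  shows "\<exists>g. continuous_map X euclideanreal g
           \<and> (\<forall>i<n. \<forall>x\<in>fibre X \<pi> (y i). g x = f i x)
           \<and> (\<forall>y'\<in>topspace Y - y ` {..<n}. \<exists>c. \<forall>x\<in>fibre X \<pi> y'. g x = c)"
proof -
  define A where "A = y ` {..<n}"
  define K where "K = {x \<in> topspace X. \<pi> x \<in> A}"
  define q where "q = collapse_fibres X \<pi> A"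
  define Z where "Z = quotient_topology X q"
  have "t1_space Y"
    using \<open>Hausdorff_space Y\<close> by (rule Hausdorff_imp_t1_space)
  have "normal_space X"
    using assms(1,2) by (simp add: compact_Hausdorff_or_regular_imp_normal_space)
  have q: "continuous_map X Z q" "q ` topspace X = topspace Z"
    using quotient_map_quotient_topology[of X q]
    by (simp_all add: Z_def quotient_imp_continuous_map topspace_quotient_topology)
  have "closed_map X Z q"
    unfolding Z_def q_def using assms(7,2,1,3,5) by (rule closed_map_collapse_fibres)
  have "closedin X K"
    unfolding K_def A_def using \<open>t1_space Y\<close> assms(5) by (simp add: closedin_preimage_finite)
  have "inj_on q K"
    by (auto simp: inj_on_def q_def K_def collapse_fibres_def)
  have pasted: "continuous_map (subtopology X K) euclideanreal (\<lambda>x. f (inv_into {..<n} y (\<pi> x)) x)"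
    unfolding K_def A_def
    by (rule continuous_map_paste_fibres[OF \<open>t1_space Y\<close> assms(5)]) (use assms(8,10) in auto)
  obtain g where g: "continuous_map Z euclideanreal g"
    "\<And>x. x \<in> K \<Longrightarrow> g (q x) = f (inv_into {..<n} y (\<pi> x)) x"
    using Tietze_extension_through_closed_map[OF \<open>normal_space X\<close> q(1) \<open>closed_map X Z q\<close> q(2)
        \<open>closedin X K\<close> \<open>inj_on q K\<close> pasted]
    by blast
  show ?thesis
  proof (intro exI[of _ "g \<circ> q"] conjI allI impI ballI)
    show "continuous_map X euclideanreal (g \<circ> q)"
      using q(1) g(1) by (rule continuous_map_compose)
  next
    fix i x assume "i < n" "x \<in> fibre X \<pi> (y i)"
    then show "(g \<circ> q) x = f i x"
      using g(2)[of x] assms(8) by (auto simp: K_def A_def fibre_def)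
  next
    fix y' assume "y' \<in> topspace Y - y ` {..<n}"
    then have "\<forall>x\<in>fibre X \<pi> y'. q x = fibre X \<pi> y'"
      by (auto simp: q_def A_def collapse_fibres_def fibre_def)
    then show "\<exists>c. \<forall>x\<in>fibre X \<pi> y'. (g \<circ> q) x = c"
      by auto
  qed
qed

end
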